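(* Let $n$ and $\ell$ be even with $n\ge 4$. Then $\max(n,\ell)=\binom{n}{2}-\left(\frac{n}{2}+1\right)$ if and only if $\gcd(n-1,\ell)\ne 1$ and $\gcd(n-3,\ell)=1$. Moreover, in this case the only $(n,\ell)$-extremal graph is $\overline{P_4\cup\left(\frac{n}{2}-2\right)P_2}$, the complement of the unique pendant graph of order $n$ and size $\frac{n}{2}+1$.
   Context: All graphs are finite and simple; $\overline{G}$ is the complement; $kH$ is $k$ disjoint copies of $H$; $P_k$ is the path on $k$ vertices. For a graph $H$, $H\odot K_1$ is obtained from $H$ by adding for each vertex $u$ of $H$ a new vertex adjacent only to $u$; a pendant graph is a graph of this form. Vertex labels lie in $\mathbb{Z}_\ell$. In the neighborhood Lights Out game on $G$, toggling a vertex $v$ adds $1$ (mod $\ell$) to the label of each vertex of the closed neighborhood $N[v]$; the game is won when all labels are $0$. $G$ is $N$-AW if the game can be won from every initial labeling. $\max(n,\ell)$ is the maximum number of edges of an $N$-AW graph on $n$ vertices, and an $(n,\ell)$-extremal graph is an $N$-AW graph on $n$ vertices with $\max(n,\ell)$ edges. *)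

theory Defs
  imports Main
begin

definition is_graph :: "nat \<Rightarrow> nat set set \<Rightarrow> bool" where
  "is_graph n E \<longleftrightarrow> E \<subseteq> {{u, v} | u v. u < n \<and> v < n \<and> u \<noteq> v}"

definition all_pairs :: "nat \<Rightarrow> nat set set" where
  "all_pairs n = {{u, v} | u v. u < n \<and> v < n \<and> u \<noteq> v}"

definition compl_graph :: "nat \<Rightarrow> nat set set \<Rightarrow> nat set set" where
  "compl_graph n E = all_pairs n - E"

definition closed_nbhd :: "nat \<Rightarrow> nat set set \<Rightarrow> nat \<Rightarrow> nat set" where
  "closed_nbhd n E v = {u. u < n \<and> (u = v \<or> {u, v} \<in> E)}"

text \<open>Neighbourhood Lights Out over Z_l: labels are integers taken modulo l;
  a toggling vector t (t u = number of times u is toggled) wins from the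
  labelling f iff every final label f v + sum of t over N[v] is 0 mod l.\<close>
definition N_AW :: "nat \<Rightarrow> nat \<Rightarrow> nat set set \<Rightarrow> bool" where
  "N_AW n l E \<longleftrightarrow>
     (\<forall>f :: nat \<Rightarrow> int. \<exists>t :: nat \<Rightarrow> int. \<forall>v < n.
        (f v + (\<Sum>u \<in> closed_nbhd n E v. t u)) mod int l = 0)"

definition maxN :: "nat \<Rightarrow> nat \<Rightarrow> nat" where
  "maxN n l = Max {card E | E. is_graph n E \<and> N_AW n l E}"

definition extremal :: "nat \<Rightarrow> nat \<Rightarrow> nat set set \<Rightarrow> bool" where
  "extremal n l E \<longleftrightarrow> is_graph n E \<and> N_AW n l E \<and> card E = maxN n l"

definition graph_iso :: "nat \<Rightarrow> nat set set \<Rightarrow> nat set set \<Rightarrow> bool" where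
  "graph_iso n E1 E2 \<longleftrightarrow>
     (\<exists>\<pi>. bij_betw \<pi> {..<n} {..<n} \<and> E2 = (\<lambda>e. \<pi> ` e) ` E1)"

definition P4_P2s :: "nat \<Rightarrow> nat set set" where
  "P4_P2s n = {{0, 1}, {1, 2}, {2, 3}} \<union> {{2 * k, 2 * k + 1} | k. 2 \<le> k \<and> k < n div 2}"

text \<open>Corona H \<odot> K_1 of a graph H on {0..<m}: vertex i+m is the pendant
  vertex attached to i.\<close>
definition corona :: "nat \<Rightarrow> nat set set \<Rightarrow> nat set set" where
  "corona m H = H \<union> {{i, i + m} | i. i < m}"

definition pendant :: "nat \<Rightarrow> nat set set \<Rightarrow> bool" where
  "pendant n G \<longleftrightarrow> is_graph n G \<and>
     (\<exists>m H. 2 * m = n \<and> is_graph m H \<and> graph_iso n (corona m H) G)"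

end

theory Submission
  imports Defs
begin

text \<open>Let \<open>H\<close> be the complement of an N-AW graph on \<open>n\<close> vertices. The closed-neighbourhood
  matrix is symmetric, so winnability rules out every vector that is nonzero modulo a divisor
  \<open>d\<close> of \<open>l\<close> while all its closed-neighbourhood sums are divisible by \<open>d\<close>. For even \<open>l\<close> this
  forbids in \<open>H\<close> a nonempty vertex set of even size meeting every neighbourhood in an even
  number of vertices; in particular \<open>H\<close> has no twins, hence at most one isolated vertex and
  at most one leaf at every vertex. Counting degrees, an \<open>H\<close> with at most \<open>n/2 + 1\<close> edges is
  then either a perfect matching or a path \<open>a-b-c-d\<close> plus a perfect matching of the other
  vertices. For these two graphs the same duality, applied to a vector whose closed-neighbourhood
  sums in the complement are constantly \<open>n - 1\<close> resp. \<open>n - 3\<close>, shows that the complement is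
  N-AW only if \<open>gcd (n - 1) l = 1\<close> resp. \<open>gcd (n - 3) l = 1\<close>; conversely, inverting the
  neighbourhood map of \<open>H\<close> makes every labelling constant, and a multiple of that vector then
  clears it. Finally, all graphs of the second
  kind are isomorphic to \<open>P4_P2s n\<close>, and so is the corona of a single edge, which is the only
  pendant graph with \<open>n/2 + 1\<close> edges.\<close>

section \<open>Graphs, neighbourhoods and complements\<close>

definition open_nbhd :: "nat \<Rightarrow> nat set set \<Rightarrow> nat \<Rightarrow> nat set" where
  "open_nbhd n H v = {u. u < n \<and> {u, v} \<in> H}"

lemma is_graph_iff_subset_all_pairs: "is_graph n H \<longleftrightarrow> H \<subseteq> all_pairs n"
  unfolding is_graph_def all_pairs_def by simp

lemma is_graph_edgeE:
  assumes "is_graph n H" "e \<in> H"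
  obtains u v where "e = {u, v}" "u < n" "v < n" "u \<noteq> v"
  using assms unfolding is_graph_def by blast

lemma is_graph_Pow: "is_graph n H \<Longrightarrow> H \<subseteq> Pow {..<n}"
  unfolding is_graph_def by auto

lemma singleton_not_edge: "is_graph n H \<Longrightarrow> {v} \<notin> H"
  unfolding is_graph_def by (auto simp: doubleton_eq_iff)

lemma all_pairs_eq: "all_pairs n = {B. B \<subseteq> {..<n} \<and> card B = 2}"
  unfolding all_pairs_def by (auto simp: card_2_iff)

lemma finite_all_pairs: "finite (all_pairs n)"
  unfolding all_pairs_eq by (rule finite_subset[of _ "Pow {..<n}"]) auto

lemma card_all_pairs: "card (all_pairs n) = n choose 2"
  using n_subsets[of "{..<n}" 2] by (simp add: all_pairs_eq)

lemma finite_graph: "is_graph n H \<Longrightarrow> finite H"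
  using finite_all_pairs is_graph_iff_subset_all_pairs finite_subset by metis

lemma card_graph_le: "is_graph n H \<Longrightarrow> card H \<le> n choose 2"
  using card_mono[OF finite_all_pairs] card_all_pairs is_graph_iff_subset_all_pairs by metis

lemma is_graph_compl_graph: "is_graph n (compl_graph n H)"
  unfolding compl_graph_def is_graph_iff_subset_all_pairs by auto

lemma compl_compl_graph: "is_graph n H \<Longrightarrow> compl_graph n (compl_graph n H) = H"
  unfolding compl_graph_def is_graph_iff_subset_all_pairs by auto

lemma card_compl_graph: "is_graph n H \<Longrightarrow> card (compl_graph n H) = (n choose 2) - card H"
  unfolding compl_graph_def
  by (simp add: card_Diff_subset finite_graph card_all_pairs is_graph_iff_subset_all_pairs)

lemma card_eq_diff_card_compl_graph:
  "is_graph n E \<Longrightarrow> card E = (n choose 2) - card (compl_graph n E) \<and> card (compl_graph n E) \<le> n choose 2"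
  using card_compl_graph[OF is_graph_compl_graph, of n E] compl_compl_graph[of n E]
    card_graph_le[OF is_graph_compl_graph] by simp

lemma finite_open_nbhd: "finite (open_nbhd n H v)"
  unfolding open_nbhd_def by simp

lemma closed_nbhd_compl_graph:
  assumes "is_graph n H" "v < n"
  shows "closed_nbhd n (compl_graph n H) v = {..<n} - open_nbhd n H v"
  using assms singleton_not_edge[OF assms(1), of v]
  unfolding closed_nbhd_def open_nbhd_def compl_graph_def all_pairs_def by auto

lemma sum_closed_nbhd_compl_graph:
  assumes "is_graph n H" "v < n"
  shows "(\<Sum>u\<in>closed_nbhd n (compl_graph n H) v. t u) = (\<Sum>u<n. t u) - (\<Sum>u\<in>open_nbhd n H v. (t u :: int))"
  using closed_nbhd_compl_graph[OF assms]
  by (simp add: sum_diff open_nbhd_def subset_eq)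

lemma handshake:
  assumes "is_graph n H"
  shows "(\<Sum>v<n. card (open_nbhd n H v)) = 2 * card H"
proof -
  have "card (open_nbhd n H v) = (\<Sum>e\<in>H. if v \<in> e then 1 else 0)" if "v < n" for v
  proof -
    have "bij_betw (\<lambda>u. {u, v}) (open_nbhd n H v) {e\<in>H. v \<in> e}"
    proof (rule bij_betwI')
      fix e assume e: "e \<in> {e\<in>H. v \<in> e}"
      then obtain x y where "e = {x, y}" "x < n" "y < n" "x \<noteq> y"
        using is_graph_edgeE[OF assms] by blast
      with e show "\<exists>u\<in>open_nbhd n H v. e = {u, v}"
        unfolding open_nbhd_def by (auto simp: insert_commute)
    qed (auto simp: open_nbhd_def doubleton_eq_iff)
    then show ?thesis
      by (simp add: bij_betw_same_card sum.inter_filter[OF finite_graph[OF assms], symmetric])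
  qed
  then have "(\<Sum>v<n. card (open_nbhd n H v)) = (\<Sum>e\<in>H. \<Sum>v<n. if v \<in> e then 1 else 0)"
    by (simp add: sum.swap[of _ H])
  also have "\<dots> = (\<Sum>e\<in>H. 2)"
  proof (rule sum.cong[OF refl])
    fix e assume "e \<in> H"
    then obtain x y where xy: "e = {x, y}" "x < n" "y < n" "x \<noteq> y"
      using is_graph_edgeE[OF assms] by blast
    then have "{v\<in>{..<n}. v \<in> e} = {x, y}" by auto
    then show "(\<Sum>v<n. if v \<in> e then 1 else 0) = (2::nat)"
      using xy sum.inter_filter[of "{..<n}" "\<lambda>_. 1::nat" "\<lambda>v. v \<in> e"] by simp
  qed
  finally show ?thesis by simp
qed

section \<open>Winnability and closed-neighbourhood sums\<close>

lemma closed_nbhd_eq: "closed_nbhd n E v = {u \<in> {..<n}. u = v \<or> {u, v} \<in> E}"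
  unfolding closed_nbhd_def by auto

lemma sum_closed_nbhd_swap:
  "(\<Sum>v<n. y v * (\<Sum>u\<in>closed_nbhd n E v. t u)) = (\<Sum>u<n. t u * (\<Sum>v\<in>closed_nbhd n E u. (y v :: int)))"
proof -
  have "(\<Sum>v<n. y v * (\<Sum>u\<in>closed_nbhd n E v. t u))
      = (\<Sum>v<n. \<Sum>u\<in>{u \<in> {..<n}. u = v \<or> {u, v} \<in> E}. y v * t u)"
    by (simp add: closed_nbhd_eq sum_distrib_left)
  also have "\<dots> = (\<Sum>u<n. \<Sum>v\<in>{v \<in> {..<n}. u = v \<or> {u, v} \<in> E}. y v * t u)"
    by (rule sum.swap_restrict) auto
  also have "\<dots> = (\<Sum>u<n. t u * (\<Sum>v\<in>closed_nbhd n E u. y v))"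
  proof -
    have "{v \<in> {..<n}. u = v \<or> {u, v} \<in> E} = closed_nbhd n E u" for u
      unfolding closed_nbhd_def by (auto simp: insert_commute)
    then show ?thesis
      by (simp add: sum_distrib_left mult.commute)
  qed
  finally show ?thesis .
qed

text \<open>By symmetry of the closed-neighbourhood matrix, pairing \<open>y\<close> with the winning equations
  for the labelling that is \<open>1\<close> at \<open>v0\<close> and \<open>0\<close> elsewhere leaves \<open>y v0\<close> modulo \<open>d\<close>.\<close>
lemma N_AW_dvd_of_dvd_closed_sums:
  assumes AW: "N_AW n l E" and "d dvd int l" and v0: "v0 < n"
    and sums: "\<forall>u<n. d dvd (\<Sum>v\<in>closed_nbhd n E u. y v)"
  shows "d dvd y v0"
proof -
  define f :: "nat \<Rightarrow> int" where "f v = (if v = v0 then 1 else 0)" for v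
  have "(\<Sum>v<n. y v * f v) = (\<Sum>v<n. if v = v0 then y v else 0)"
    by (rule sum.cong) (auto simp: f_def)
  then have f_sum: "(\<Sum>v<n. y v * f v) = y v0"
    using v0 by simp
  obtain t where t: "\<forall>v<n. (f v + (\<Sum>u\<in>closed_nbhd n E v. t u)) mod int l = 0"
    using AW unfolding N_AW_def by blast
  have "\<forall>v<n. d dvd f v + (\<Sum>u\<in>closed_nbhd n E v. t u)"
    using dvd_trans[OF \<open>d dvd int l\<close> mod_0_imp_dvd] t by blast
  then have "d dvd (\<Sum>v<n. y v * (f v + (\<Sum>u\<in>closed_nbhd n E v. t u)))"
    by (intro dvd_sum) auto
  then have "d dvd y v0 + (\<Sum>v<n. y v * (\<Sum>u\<in>closed_nbhd n E v. t u))"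
    by (simp add: distrib_left sum.distrib f_sum)
  then have "d dvd y v0 + (\<Sum>u<n. t u * (\<Sum>v\<in>closed_nbhd n E u. y v))"
    by (simp only: sum_closed_nbhd_swap[of y t n E])
  moreover have "d dvd (\<Sum>u<n. t u * (\<Sum>v\<in>closed_nbhd n E u. y v))"
    using sums by (intro dvd_sum) auto
  ultimately show ?thesis
    using dvd_add_left_iff by blast
qed

lemma N_AW_imp_coprime:
  assumes AW: "N_AW n l E" and v0: "v0 < n" "y v0 = 1"
    and sums: "\<forall>v<n. (\<Sum>u\<in>closed_nbhd n E v. y u) = int k"
  shows "gcd k l = 1"
proof -
  have "int (gcd k l) dvd y v0"
  proof (rule N_AW_dvd_of_dvd_closed_sums[OF AW _ v0(1)])
    show "int (gcd k l) dvd int l" by simp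
    show "\<forall>u<n. int (gcd k l) dvd (\<Sum>v\<in>closed_nbhd n E u. y v)"
      using sums by simp
  qed
  then show ?thesis
    using v0(2) by simp
qed

lemma coprime_imp_N_AW:
  assumes coprime: "gcd k l = 1"
    and sums: "\<forall>v<n. (\<Sum>u\<in>closed_nbhd n E v. y u) = int k"
    and normalizable: "\<forall>f :: nat \<Rightarrow> int. \<exists>t c. \<forall>v<n. f v + (\<Sum>u\<in>closed_nbhd n E v. t u) = c"
  shows "N_AW n l E"
  unfolding N_AW_def
proof
  fix f :: "nat \<Rightarrow> int"
  have "gcd (int k) (int l) = 1"
    using coprime by (simp only: gcd_int_int_eq of_nat_1)
  then obtain s r where bezout: "s * int k + r * int l = 1"
    using bezout_int[of "int k" "int l"] by metis
  obtain t c where t: "\<forall>v<n. f v + (\<Sum>u\<in>closed_nbhd n E v. t u) = c"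
    using spec[OF normalizable, of f] by (elim exE)
  define t' where "t' u = t u - c * s * y u" for u
  have "f v + (\<Sum>u\<in>closed_nbhd n E v. t' u) = int l * (c * r)" if "v < n" for v
  proof -
    have "(\<Sum>u\<in>closed_nbhd n E v. t' u)
        = (\<Sum>u\<in>closed_nbhd n E v. t u) - c * s * (\<Sum>u\<in>closed_nbhd n E v. y u)"
      by (simp add: t'_def sum_subtractf sum_distrib_left)
    then have "f v + (\<Sum>u\<in>closed_nbhd n E v. t' u) = c * (s * int k + r * int l) - c * s * int k"
      using t sums that bezout by simp
    also have "\<dots> = int l * (c * r)"
      by (simp add: algebra_simps)
    finally show ?thesis .
  qed
  then have "\<forall>v<n. (f v + (\<Sum>u\<in>closed_nbhd n E v. t' u)) mod int l = 0"
    by simp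
  then show "\<exists>t. \<forall>v<n. (f v + (\<Sum>u\<in>closed_nbhd n E v. t u)) mod int l = 0"
    by blast
qed

text \<open>In the complement of \<open>H\<close> a closed-neighbourhood sum is the total sum minus an
  open-neighbourhood sum in \<open>H\<close>; so if the open-neighbourhood map of \<open>H\<close> is onto, every
  labelling of the complement can be made constant.\<close>
lemma N_AW_compl_graph_iff_coprime:
  assumes H: "is_graph n H" and v0: "v0 < n" "y v0 = 1"
    and sums: "\<forall>v<n. (\<Sum>u<n. y u) - (\<Sum>u\<in>open_nbhd n H v. y u) = int k"
    and invertible: "\<forall>f :: nat \<Rightarrow> int. \<exists>t. \<forall>v<n. (\<Sum>u\<in>open_nbhd n H v. t u) = f v"
  shows "N_AW n l (compl_graph n H) \<longleftrightarrow> gcd k l = 1"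
proof -
  have closed_sums: "\<forall>v<n. (\<Sum>u\<in>closed_nbhd n (compl_graph n H) v. y u) = int k"
    using sums sum_closed_nbhd_compl_graph[OF H] by simp
  have normalizable: "\<exists>t c. \<forall>v<n. f v + (\<Sum>u\<in>closed_nbhd n (compl_graph n H) v. t u) = c"
    for f :: "nat \<Rightarrow> int"
  proof -
    obtain t where "\<forall>v<n. (\<Sum>u\<in>open_nbhd n H v. t u) = f v"
      using spec[OF invertible, of f] by (elim exE)
    then have "\<forall>v<n. f v + (\<Sum>u\<in>closed_nbhd n (compl_graph n H) v. t u) = (\<Sum>u<n. t u)"
      using sum_closed_nbhd_compl_graph[OF H] by simp
    then show ?thesis by blast
  qed
  show ?thesis
  proof
    show "N_AW n l (compl_graph n H) \<Longrightarrow> gcd k l = 1"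
      using N_AW_imp_coprime[OF _ v0 closed_sums] .
    assume "gcd k l = 1"
    then show "N_AW n l (compl_graph n H)"
      using normalizable by (intro coprime_imp_N_AW[OF _ closed_sums] allI)
  qed
qed

section \<open>Invariance under isomorphism\<close>

abbreviation edge_image :: "(nat \<Rightarrow> nat) \<Rightarrow> nat set set \<Rightarrow> nat set set" where
  "edge_image \<pi> E \<equiv> (\<lambda>e. \<pi> ` e) ` E"

lemma inj_on_image_Pow_lessThan: "bij_betw \<pi> {..<n} {..<n} \<Longrightarrow> inj_on (image \<pi>) (Pow {..<n})"
  using inj_on_image_Pow bij_betw_def by blast

lemma edge_image_all_pairs:
  assumes "bij_betw \<pi> {..<n} {..<n}"
  shows "edge_image \<pi> (all_pairs n) = all_pairs n"
proof
  have inj: "inj_on \<pi> {..<n}" and onto: "\<pi> ` {..<n} = {..<n}"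
    using assms unfolding bij_betw_def by auto
  show "edge_image \<pi> (all_pairs n) \<subseteq> all_pairs n"
  proof
    fix e assume "e \<in> edge_image \<pi> (all_pairs n)"
    then obtain u v where uv: "e = \<pi> ` {u, v}" "u < n" "v < n" "u \<noteq> v"
      unfolding all_pairs_def by auto
    then have "\<pi> u \<noteq> \<pi> v" "\<pi> u < n" "\<pi> v < n"
      using inj onto by (auto dest: inj_onD)
    with uv(1) show "e \<in> all_pairs n"
      unfolding all_pairs_def by auto
  qed
  show "all_pairs n \<subseteq> edge_image \<pi> (all_pairs n)"
  proof
    fix e assume "e \<in> all_pairs n"
    then obtain u v where uv: "e = {u, v}" "u < n" "v < n" "u \<noteq> v"
      unfolding all_pairs_def by auto
    then obtain x y where "x < n" "y < n" "u = \<pi> x" "v = \<pi> y"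
      using onto by (metis imageE lessThan_iff)
    with uv have "{x, y} \<in> all_pairs n" "e = \<pi> ` {x, y}"
      unfolding all_pairs_def by auto
    then show "e \<in> edge_image \<pi> (all_pairs n)" by blast
  qed
qed

lemma edge_image_mem_iff:
  assumes "bij_betw \<pi> {..<n} {..<n}" "is_graph n E" "x < n" "v < n"
  shows "{\<pi> x, \<pi> v} \<in> edge_image \<pi> E \<longleftrightarrow> {x, v} \<in> E"
proof
  assume "{\<pi> x, \<pi> v} \<in> edge_image \<pi> E"
  then obtain e where e: "e \<in> E" "\<pi> ` e = \<pi> ` {x, v}"
    by auto
  moreover have "e \<in> Pow {..<n}" "{x, v} \<in> Pow {..<n}"
    using e(1) is_graph_Pow[OF assms(2)] assms(3,4) by auto
  ultimately show "{x, v} \<in> E"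
    using inj_onD[OF inj_on_image_Pow_lessThan[OF assms(1)]] by metis
next
  assume "{x, v} \<in> E"
  then show "{\<pi> x, \<pi> v} \<in> edge_image \<pi> E"
    by (metis image_empty image_eqI image_insert)
qed

lemma graph_iso_is_graph: "is_graph n E1 \<Longrightarrow> graph_iso n E1 E2 \<Longrightarrow> is_graph n E2"
  unfolding graph_iso_def is_graph_iff_subset_all_pairs using edge_image_all_pairs by blast

lemma graph_iso_card:
  assumes "is_graph n E1" "graph_iso n E1 E2"
  shows "card E2 = card E1"
proof -
  obtain \<pi> where \<pi>: "bij_betw \<pi> {..<n} {..<n}" "E2 = edge_image \<pi> E1"
    using assms(2) unfolding graph_iso_def by blast
  have "inj_on (image \<pi>) E1"
    using inj_on_subset[OF inj_on_image_Pow_lessThan[OF \<pi>(1)] is_graph_Pow[OF assms(1)]] .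
  then show ?thesis
    using \<pi>(2) by (simp add: card_image)
qed

lemma graph_iso_trans:
  assumes "graph_iso n E1 E2" "graph_iso n E2 E3"
  shows "graph_iso n E1 E3"
proof -
  obtain \<pi> \<rho> where "bij_betw \<pi> {..<n} {..<n}" "E2 = edge_image \<pi> E1"
    "bij_betw \<rho> {..<n} {..<n}" "E3 = edge_image \<rho> E2"
    using assms unfolding graph_iso_def by blast
  moreover have "edge_image \<rho> (edge_image \<pi> E1) = edge_image (\<rho> \<circ> \<pi>) E1"
    by (simp add: image_image image_comp)
  ultimately show ?thesis
    unfolding graph_iso_def using bij_betw_trans by metis
qed

lemma graph_iso_compl_graph:
  assumes "is_graph n E1" "graph_iso n E1 E2"
  shows "graph_iso n (compl_graph n E1) (compl_graph n E2)"
proof -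
  obtain \<pi> where \<pi>: "bij_betw \<pi> {..<n} {..<n}" "E2 = edge_image \<pi> E1"
    using assms(2) unfolding graph_iso_def by blast
  have "edge_image \<pi> (all_pairs n - E1) = edge_image \<pi> (all_pairs n) - edge_image \<pi> E1"
    using inj_on_image_Pow_lessThan[OF \<pi>(1)] is_graph_Pow[OF assms(1)]
    by (intro inj_on_image_set_diff) (auto simp: all_pairs_def)
  then have "compl_graph n E2 = edge_image \<pi> (compl_graph n E1)"
    unfolding compl_graph_def \<pi>(2) edge_image_all_pairs[OF \<pi>(1)] by simp
  with \<pi>(1) show ?thesis
    unfolding graph_iso_def by blast
qed

lemma closed_nbhd_edge_image:
  assumes \<pi>: "bij_betw \<pi> {..<n} {..<n}" and E: "is_graph n E" and v: "v < n"
  shows "closed_nbhd n (edge_image \<pi> E) (\<pi> v) = \<pi> ` closed_nbhd n E v"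
proof (rule set_eqI)
  fix u
  have inj: "inj_on \<pi> {..<n}" and onto: "\<pi> ` {..<n} = {..<n}"
    using \<pi> unfolding bij_betw_def by auto
  have sub: "closed_nbhd n E v \<subseteq> {..<n}"
    unfolding closed_nbhd_def by auto
  show "u \<in> closed_nbhd n (edge_image \<pi> E) (\<pi> v) \<longleftrightarrow> u \<in> \<pi> ` closed_nbhd n E v"
  proof (cases "u < n")
    case True
    then obtain x where x: "x < n" "u = \<pi> x"
      using onto by (metis imageE lessThan_iff)
    have "u \<in> closed_nbhd n (edge_image \<pi> E) (\<pi> v) \<longleftrightarrow> \<pi> x = \<pi> v \<or> {\<pi> x, \<pi> v} \<in> edge_image \<pi> E"
      using True x(2) unfolding closed_nbhd_def by simp
    also have "\<dots> \<longleftrightarrow> x = v \<or> {x, v} \<in> E"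
      using edge_image_mem_iff[OF \<pi> E x(1) v] inj_on_eq_iff[OF inj] x(1) v by simp
    also have "\<dots> \<longleftrightarrow> u \<in> \<pi> ` closed_nbhd n E v"
      using inj_on_image_mem_iff[OF inj _ sub] x unfolding closed_nbhd_def by simp
    finally show ?thesis .
  next
    case False
    moreover have "\<pi> ` closed_nbhd n E v \<subseteq> {..<n}"
      using sub onto by blast
    ultimately show ?thesis
      unfolding closed_nbhd_def by auto
  qed
qed

lemma graph_iso_N_AW:
  assumes E1: "is_graph n E1" and iso: "graph_iso n E1 E2" and AW: "N_AW n l E1"
  shows "N_AW n l E2"
  unfolding N_AW_def
proof
  fix f :: "nat \<Rightarrow> int"
  obtain \<pi> where \<pi>: "bij_betw \<pi> {..<n} {..<n}" "E2 = edge_image \<pi> E1"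
    using iso unfolding graph_iso_def by blast
  have inj: "inj_on \<pi> {..<n}" and onto: "\<pi> ` {..<n} = {..<n}"
    using \<pi>(1) unfolding bij_betw_def by auto
  obtain t where t: "\<forall>v<n. (f (\<pi> v) + (\<Sum>u\<in>closed_nbhd n E1 v. t u)) mod int l = 0"
    using AW unfolding N_AW_def by (elim allE[of _ "f \<circ> \<pi>"] exE) simp
  define t' where "t' = t \<circ> inv_into {..<n} \<pi>"
  have "(f w + (\<Sum>u\<in>closed_nbhd n E2 w. t' u)) mod int l = 0" if "w < n" for w
  proof -
    obtain v where v: "v < n" "w = \<pi> v"
      using onto \<open>w < n\<close> by (metis imageE lessThan_iff)
    have sub: "closed_nbhd n E1 v \<subseteq> {..<n}"
      unfolding closed_nbhd_def by auto
    have "(\<Sum>u\<in>closed_nbhd n E2 w. t' u) = (\<Sum>x\<in>closed_nbhd n E1 v. t' (\<pi> x))"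
      unfolding closed_nbhd_edge_image[OF \<pi>(1) E1 v(1), folded \<pi>(2) v(2)]
      using inj_on_subset[OF inj sub] by (rule sum.reindex[unfolded comp_def])
    also have "\<dots> = (\<Sum>x\<in>closed_nbhd n E1 v. t x)"
      using sub inj by (intro sum.cong refl) (auto simp: t'_def)
    finally show ?thesis
      using t v by simp
  qed
  then show "\<exists>t. \<forall>v<n. (f v + (\<Sum>u\<in>closed_nbhd n E2 v. t u)) mod int l = 0"
    by blast
qed

section \<open>Perfect matchings, and a path plus a matching\<close>

definition fpf_involution :: "nat set \<Rightarrow> (nat \<Rightarrow> nat) \<Rightarrow> bool" where
  "fpf_involution R p \<longleftrightarrow> (\<forall>v\<in>R. p v \<in> R \<and> p v \<noteq> v \<and> p (p v) = v)"

definition matching_edges :: "nat set \<Rightarrow> (nat \<Rightarrow> nat) \<Rightarrow> nat set set" where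
  "matching_edges R p = {{v, p v} | v. v \<in> R}"

lemma doubleton_in_matching_edges_iff:
  "fpf_involution R p \<Longrightarrow> {u, v} \<in> matching_edges R p \<longleftrightarrow> v \<in> R \<and> u = p v"
  unfolding matching_edges_def fpf_involution_def by (auto simp: doubleton_eq_iff)

lemma is_graph_matching_edges:
  "fpf_involution R p \<Longrightarrow> R \<subseteq> {..<n} \<Longrightarrow> is_graph n (matching_edges R p)"
  unfolding is_graph_def matching_edges_def fpf_involution_def by fastforce

lemma fpf_involution_Diff_pair:
  "fpf_involution R p \<Longrightarrow> x \<in> R \<Longrightarrow> fpf_involution (R - {x, p x}) p"
  unfolding fpf_involution_def by (metis Diff_iff insert_iff singletonD)

lemma conjugating_bij_extend:
  assumes p: "fpf_involution R p" and q: "fpf_involution S q" and "x \<in> R" "y \<in> S"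
    and \<sigma>: "bij_betw \<sigma> (S - {y, q y}) (R - {x, p x})" "\<forall>v\<in>S - {y, q y}. \<sigma> (q v) = p (\<sigma> v)"
  defines "\<sigma>' \<equiv> \<sigma>(y := x, q y := p x)"
  shows "bij_betw \<sigma>' S R \<and> (\<forall>v\<in>S. \<sigma>' (q v) = p (\<sigma>' v))"
proof
  have px: "p x \<in> R" "p x \<noteq> x" "p (p x) = x" and qy: "q y \<in> S" "q y \<noteq> y" "q (q y) = y"
    using p q \<open>x \<in> R\<close> \<open>y \<in> S\<close> unfolding fpf_involution_def by auto
  have "bij_betw \<sigma>' {y, q y} {x, p x}"
    unfolding bij_betw_def \<sigma>'_def using px qy by auto
  moreover have "bij_betw \<sigma>' (S - {y, q y}) (R - {x, p x})"
    using \<sigma>(1) by (rule bij_betw_cong[THEN iffD1, rotated]) (auto simp: \<sigma>'_def)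
  ultimately have "bij_betw \<sigma>' ({y, q y} \<union> (S - {y, q y})) ({x, p x} \<union> (R - {x, p x}))"
    by (rule bij_betw_combine) auto
  moreover have "{y, q y} \<union> (S - {y, q y}) = S" "{x, p x} \<union> (R - {x, p x}) = R"
    using \<open>x \<in> R\<close> \<open>y \<in> S\<close> px qy by auto
  ultimately show "bij_betw \<sigma>' S R"
    by simp
  show "\<forall>v\<in>S. \<sigma>' (q v) = p (\<sigma>' v)"
  proof
    fix v assume "v \<in> S"
    then consider "v = y" | "v = q y" | "v \<in> S - {y, q y}"
      by blast
    then show "\<sigma>' (q v) = p (\<sigma>' v)"
    proof cases
      case 3
      then have "q v \<in> S" "q (q v) = v"
        using q unfolding fpf_involution_def by auto
      then have "q v \<in> S - {y, q y}"
        using 3 qy(3) by auto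
      with 3 \<sigma>(2) show ?thesis
        unfolding \<sigma>'_def by auto
    qed (use px qy in \<open>auto simp: \<sigma>'_def\<close>)
  qed
qed

lemma fpf_involutions_conjugate:
  assumes "fpf_involution R p" "fpf_involution S q" "finite R" "finite S" "card S = card R"
  shows "\<exists>\<sigma>. bij_betw \<sigma> S R \<and> (\<forall>v\<in>S. \<sigma> (q v) = p (\<sigma> v))"
  using assms
proof (induction "card R" arbitrary: R S rule: less_induct)
  case less
  show ?case
  proof (cases "R = {}")
    case True
    then have "S = {}"
      using less.prems by simp
    with True show ?thesis
      by (simp add: bij_betw_def)
  next
    case False
    then obtain x y where x: "x \<in> R" and y: "y \<in> S"
      using less.prems by (metis card_0_eq ex_in_conv)
    have px: "p x \<in> R" "p x \<noteq> x" and qy: "q y \<in> S" "q y \<noteq> y"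
      using less.prems(1,2) x y unfolding fpf_involution_def by auto
    have "card {x, p x} \<le> card R"
      using less.prems(3) x px by (intro card_mono) auto
    then have "card (R - {x, p x}) < card R" "card (S - {y, q y}) = card (R - {x, p x})"
      using less.prems x y px qy by (auto simp: card_Diff_subset)
    then obtain \<sigma> where "bij_betw \<sigma> (S - {y, q y}) (R - {x, p x})"
      "\<forall>v\<in>S - {y, q y}. \<sigma> (q v) = p (\<sigma> v)"
      using less.hyps less.prems x y fpf_involution_Diff_pair by blast
    then show ?thesis
      using conjugating_bij_extend[OF less.prems(1,2) x y] by blast
  qed
qed

lemma edge_image_matching_edges:
  assumes "bij_betw \<sigma> S R" "\<forall>v\<in>S. \<sigma> (q v) = p (\<sigma> v)"
  shows "edge_image \<sigma> (matching_edges S q) = matching_edges R p"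
proof -
  have "edge_image \<sigma> (matching_edges S q) = (\<lambda>w. {w, p w}) ` (\<sigma> ` S)"
    using assms(2) unfolding matching_edges_def by (auto simp: image_image setcompr_eq_image)
  then show ?thesis
    using bij_betw_imp_surj_on[OF assms(1)] unfolding matching_edges_def by (simp add: setcompr_eq_image)
qed

lemma open_nbhd_matching_edges:
  assumes "fpf_involution R p" "R \<subseteq> {..<n}" "v \<in> R"
  shows "open_nbhd n (matching_edges R p) v = {p v}"
  using assms doubleton_in_matching_edges_iff[OF assms(1)]
  unfolding open_nbhd_def fpf_involution_def by (auto simp: subset_eq)

lemma card_perfect_matching:
  assumes "fpf_involution {..<n} p"
  shows "card (matching_edges {..<n} p) = n div 2"
proof -
  have "2 * card (matching_edges {..<n} p) = (\<Sum>v<n. card (open_nbhd n (matching_edges {..<n} p) v))"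
    using handshake[OF is_graph_matching_edges[OF assms order.refl]] by simp
  also have "\<dots> = (\<Sum>v<n. 1)"
    using open_nbhd_matching_edges[OF assms order.refl] by simp
  finally show ?thesis by simp
qed

lemma N_AW_compl_perfect_matching_iff:
  assumes p: "fpf_involution {..<n} p" and "n \<ge> 1"
  shows "N_AW n l (compl_graph n (matching_edges {..<n} p)) \<longleftrightarrow> gcd (n - 1) l = 1"
proof (rule N_AW_compl_graph_iff_coprime[of n _ 0 "\<lambda>_. 1"])
  note nbhd = open_nbhd_matching_edges[OF p order.refl, simplified]
  show "\<forall>v<n. (\<Sum>u<n. 1) - (\<Sum>u\<in>open_nbhd n (matching_edges {..<n} p) v. 1) = int (n - 1)"
    using nbhd \<open>n \<ge> 1\<close> by simp
  show "\<forall>f :: nat \<Rightarrow> int. \<exists>t. \<forall>v<n. (\<Sum>u\<in>open_nbhd n (matching_edges {..<n} p) v. t u) = f v"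
  proof
    fix f :: "nat \<Rightarrow> int"
    have "\<forall>v<n. (\<Sum>u\<in>open_nbhd n (matching_edges {..<n} p) v. f (p u)) = f v"
      using nbhd p unfolding fpf_involution_def by simp
    then show "\<exists>t. \<forall>v<n. (\<Sum>u\<in>open_nbhd n (matching_edges {..<n} p) v. t u) = f v"
      by blast
  qed
qed (use p \<open>n \<ge> 1\<close> in \<open>auto intro: is_graph_matching_edges\<close>)

definition path4_matching ::
    "nat \<Rightarrow> nat set set \<Rightarrow> nat \<Rightarrow> nat \<Rightarrow> nat \<Rightarrow> nat \<Rightarrow> (nat \<Rightarrow> nat) \<Rightarrow> bool" where
  "path4_matching n H a b c d p \<longleftrightarrow>
     {a, b, c, d} \<subseteq> {..<n} \<and> distinct [a, b, c, d] \<and> fpf_involution ({..<n} - {a, b, c, d}) p \<and>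
     H = {{a, b}, {b, c}, {c, d}} \<union> matching_edges ({..<n} - {a, b, c, d}) p"

lemma path4_matching_is_graph: "path4_matching n H a b c d p \<Longrightarrow> is_graph n H"
  unfolding path4_matching_def is_graph_def
  using is_graph_matching_edges[of "{..<n} - {a, b, c, d}" p n] unfolding is_graph_def by auto

lemma card_path4_vertices:
  assumes "path4_matching n H a b c d p"
  shows "card ({..<n} - {a, b, c, d}) = n - 4"
  using assms unfolding path4_matching_def by (simp add: card_Diff_subset)

lemma path4_matching_ge_4:
  assumes "path4_matching n H a b c d p"
  shows "n \<ge> 4"
proof -
  have "{a, b, c, d} \<subseteq> {..<n}" "distinct [a, b, c, d]"
    using assms unfolding path4_matching_def by auto
  then have "card {a, b, c, d} \<le> card {..<n}" "card {a, b, c, d} = 4"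
    by (auto intro: card_mono)
  then show ?thesis by simp
qed

lemma open_nbhd_path4_matching:
  assumes "path4_matching n H a b c d p"
  shows "open_nbhd n H a = {b}" "open_nbhd n H b = {a, c}" "open_nbhd n H c = {b, d}"
    "open_nbhd n H d = {c}" "v \<in> {..<n} - {a, b, c, d} \<Longrightarrow> open_nbhd n H v = {p v}"
proof -
  let ?R = "{..<n} - {a, b, c, d}"
  have abcd: "{a, b, c, d} \<subseteq> {..<n}" "distinct [a, b, c, d]" and p: "fpf_involution ?R p"
    and H: "H = {{a, b}, {b, c}, {c, d}} \<union> matching_edges ?R p"
    using assms unfolding path4_matching_def by auto
  have mem: "{u, v} \<in> H \<longleftrightarrow> {u, v} \<in> {{a, b}, {b, c}, {c, d}} \<or> (v \<in> ?R \<and> u = p v)" for u v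
    using H doubleton_in_matching_edges_iff[OF p] by auto
  have pR: "p v \<in> ?R" if "v \<in> ?R" for v
    using p that unfolding fpf_involution_def by blast
  show "open_nbhd n H a = {b}" "open_nbhd n H b = {a, c}" "open_nbhd n H c = {b, d}"
    "open_nbhd n H d = {c}"
    unfolding open_nbhd_def mem using abcd by (auto simp: doubleton_eq_iff)
  show "open_nbhd n H v = {p v}" if "v \<in> ?R"
    unfolding open_nbhd_def mem using that pR[OF that] by (auto simp: doubleton_eq_iff)
qed

lemma sum_split_path4:
  assumes "path4_matching n H a b c d p"
  shows "(\<Sum>u<n. g u) = g a + g b + g c + g d + (\<Sum>u\<in>{..<n} - {a, b, c, d}. (g u :: 'a :: comm_monoid_add))"
proof -
  have "{a, b, c, d} \<subseteq> {..<n}" "distinct [a, b, c, d]"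
    using assms unfolding path4_matching_def by auto
  then show ?thesis
    by (simp add: sum.subset_diff[of "{a, b, c, d}" "{..<n}"] ac_simps)
qed

lemma card_path4_matching:
  assumes "path4_matching n H a b c d p"
  shows "card H = n div 2 + 1"
proof -
  note nbhd = open_nbhd_path4_matching[OF assms]
  have "distinct [a, b, c, d]"
    using assms unfolding path4_matching_def by auto
  have "2 * card H = (\<Sum>v<n. card (open_nbhd n H v))"
    using handshake[OF path4_matching_is_graph[OF assms]] by simp
  also have "\<dots> = 1 + 2 + 2 + 1 + (\<Sum>v\<in>{..<n} - {a, b, c, d}. card (open_nbhd n H v))"
    unfolding sum_split_path4[OF assms] using nbhd \<open>distinct [a, b, c, d]\<close> by simp
  also have "\<dots> = 6 + card ({..<n} - {a, b, c, d})"
    using nbhd(5) by simp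
  also have "\<dots> = n + 2"
    using card_path4_vertices[OF assms] path4_matching_ge_4[OF assms] by simp
  finally show ?thesis by simp
qed

lemma N_AW_compl_path4_matching_iff:
  assumes P: "path4_matching n H a b c d p"
  shows "N_AW n l (compl_graph n H) \<longleftrightarrow> gcd (n - 3) l = 1"
proof -
  let ?R = "{..<n} - {a, b, c, d}"
  have abcd: "{a, b, c, d} \<subseteq> {..<n}" "distinct [a, b, c, d]" and p: "fpf_involution ?R p"
    using P unfolding path4_matching_def by auto
  have pR: "p v \<in> ?R" "p (p v) = v" if "v \<in> ?R" for v
    using p that unfolding fpf_involution_def by auto
  note nbhd = open_nbhd_path4_matching[OF P]
  note split = sum_split_path4[OF P]
  txt \<open>\<open>y\<close> vanishes at the ends of the path, so every open neighbourhood contains exactly one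
    vertex where \<open>y = 1\<close>; the \<open>t\<close> below inverts the open-neighbourhood map of \<open>H\<close>.\<close>
  define y :: "nat \<Rightarrow> int" where "y u = (if u = a \<or> u = d then 0 else 1)" for u
  show ?thesis
  proof (rule N_AW_compl_graph_iff_coprime[of n H b y])
    have "(\<Sum>u<n. y u) = int n - 2"
      using abcd card_path4_vertices[OF P] path4_matching_ge_4[OF P]
      by (simp add: split y_def)
    moreover have "(\<Sum>u\<in>open_nbhd n H v. y u) = 1" if "v < n" for v
      using that abcd nbhd pR by (cases "v \<in> ?R") (auto simp: y_def)
    ultimately show "\<forall>v<n. (\<Sum>u<n. y u) - (\<Sum>u\<in>open_nbhd n H v. y u) = int (n - 3)"
      using path4_matching_ge_4[OF P] by simp
    show "\<forall>f :: nat \<Rightarrow> int. \<exists>t. \<forall>v<n. (\<Sum>u\<in>open_nbhd n H v. t u) = f v"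
    proof
      fix f :: "nat \<Rightarrow> int"
      define t where "t u = (if u = a then f b - f d else if u = b then f a else if u = c then f d
        else if u = d then f c - f a else f (p u))" for u
      have "(\<Sum>u\<in>open_nbhd n H v. t u) = f v" if "v < n" for v
        using that abcd nbhd pR by (cases "v \<in> ?R") (auto simp: t_def)
      then show "\<exists>t. \<forall>v<n. (\<Sum>u\<in>open_nbhd n H v. t u) = f v"
        by blast
    qed
  qed (use P abcd in \<open>auto simp: path4_matching_is_graph y_def\<close>)
qed

lemma path4_matching_graph_iso:
  assumes P: "path4_matching n H a b c d p" and P': "path4_matching n H' a' b' c' d' p'"
  shows "graph_iso n H H'"
proof -
  let ?R = "{..<n} - {a, b, c, d}" and ?R' = "{..<n} - {a', b', c', d'}"
  have abcd: "{a, b, c, d} \<subseteq> {..<n}" "distinct [a, b, c, d]" and p: "fpf_involution ?R p"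
    and H: "H = {{a, b}, {b, c}, {c, d}} \<union> matching_edges ?R p"
    using P unfolding path4_matching_def by auto
  have abcd': "{a', b', c', d'} \<subseteq> {..<n}" "distinct [a', b', c', d']" and p': "fpf_involution ?R' p'"
    and H': "H' = {{a', b'}, {b', c'}, {c', d'}} \<union> matching_edges ?R' p'"
    using P' unfolding path4_matching_def by auto
  obtain \<sigma> where \<sigma>: "bij_betw \<sigma> ?R ?R'" "\<forall>v\<in>?R. \<sigma> (p v) = p' (\<sigma> v)"
    using fpf_involutions_conjugate[OF p' p] card_path4_vertices[OF P] card_path4_vertices[OF P']
    by auto
  define \<pi> where "\<pi> v = (if v = a then a' else if v = b then b' else if v = c then c'
    else if v = d then d' else \<sigma> v)" for v
  have "bij_betw \<pi> {a, b, c, d} {a', b', c', d'}"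
    using abcd(2) abcd'(2) unfolding bij_betw_def inj_on_def \<pi>_def by auto
  moreover have \<pi>_R: "bij_betw \<pi> ?R ?R'"
    using \<sigma>(1) by (rule bij_betw_cong[THEN iffD1, rotated]) (auto simp: \<pi>_def)
  ultimately have "bij_betw \<pi> ({a, b, c, d} \<union> ?R) ({a', b', c', d'} \<union> ?R')"
    by (rule bij_betw_combine) auto
  moreover have "{a, b, c, d} \<union> ?R = {..<n}" "{a', b', c', d'} \<union> ?R' = {..<n}"
    using abcd(1) abcd'(1) by auto
  ultimately have bij: "bij_betw \<pi> {..<n} {..<n}"
    by simp
  have "\<forall>v\<in>?R. \<pi> (p v) = p' (\<pi> v)"
    using \<sigma>(2) p unfolding fpf_involution_def \<pi>_def by auto
  then have "edge_image \<pi> (matching_edges ?R p) = matching_edges ?R' p'"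
    by (rule edge_image_matching_edges[OF \<pi>_R])
  moreover have "edge_image \<pi> {{a, b}, {b, c}, {c, d}} = {{a', b'}, {b', c'}, {c', d'}}"
    using abcd(2) by (simp add: \<pi>_def insert_commute)
  ultimately have "H' = edge_image \<pi> H"
    unfolding H H' image_Un by (simp only:)
  with bij show ?thesis
    unfolding graph_iso_def by blast
qed

definition pair_partner :: "nat \<Rightarrow> nat" where
  "pair_partner v = (if even v then v + 1 else v - 1)"

lemma fpf_involution_pair_partner:
  assumes "even k" "even n"
  shows "fpf_involution {k..<n} pair_partner"
  using assms unfolding fpf_involution_def pair_partner_def
  by auto presburger+

lemma matching_edges_pair_partner:
  assumes "even k" "even n"
  shows "matching_edges {k..<n} pair_partner = {{2 * i, 2 * i + 1} | i. k div 2 \<le> i \<and> i < n div 2}"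
proof (intro set_eqI iffI)
  fix e assume "e \<in> matching_edges {k..<n} pair_partner"
  then obtain v where v: "k \<le> v" "v < n" "e = {v, pair_partner v}"
    unfolding matching_edges_def by auto
  show "e \<in> {{2 * i, 2 * i + 1} | i. k div 2 \<le> i \<and> i < n div 2}"
  proof (cases "even v")
    case True
    with v assms show ?thesis
      by (intro CollectI exI[of _ "v div 2"]) (auto simp: pair_partner_def elim!: evenE)
  next
    case False
    with v assms show ?thesis
      by (intro CollectI exI[of _ "v div 2"]) (auto simp: pair_partner_def elim!: evenE oddE)
  qed
next
  fix e assume "e \<in> {{2 * i, 2 * i + 1} | i. k div 2 \<le> i \<and> i < n div 2}"
  then obtain i where i: "k div 2 \<le> i" "i < n div 2" "e = {2 * i, 2 * i + 1}"
    by auto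
  then have "2 * i \<in> {k..<n}" "e = {2 * i, pair_partner (2 * i)}"
    using assms by (auto simp: pair_partner_def elim!: evenE)
  then show "e \<in> matching_edges {k..<n} pair_partner"
    unfolding matching_edges_def by blast
qed

lemma path4_matching_P4_P2s:
  assumes "even n" "n \<ge> 4"
  shows "path4_matching n (P4_P2s n) 0 1 2 3 pair_partner"
proof -
  have R: "{..<n} - {0, 1, 2, 3} = {4..<n}"
    by auto
  show ?thesis
    unfolding path4_matching_def R P4_P2s_def
    using assms fpf_involution_pair_partner[of 4 n] matching_edges_pair_partner[of 4 n] by auto
qed

definition swap_halves :: "nat \<Rightarrow> nat \<Rightarrow> nat" where
  "swap_halves m v = (if v < m then v + m else v - m)"

lemma path4_matching_corona_edge:
  assumes ab: "a < m" "b < m" "a \<noteq> b"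
  shows "path4_matching (2 * m) (corona m {{a, b}}) (a + m) a b (b + m) (swap_halves m)"
proof -
  let ?R = "{..<2 * m} - {a + m, a, b, b + m}"
  have fpf: "fpf_involution ?R (swap_halves m)"
    using ab unfolding fpf_involution_def swap_halves_def by auto
  have "matching_edges ?R (swap_halves m) = {{i, i + m} | i. i < m \<and> i \<noteq> a \<and> i \<noteq> b}"
  proof (intro set_eqI iffI)
    fix e assume "e \<in> matching_edges ?R (swap_halves m)"
    then obtain v where v: "v \<in> ?R" "e = {v, swap_halves m v}"
      unfolding matching_edges_def by auto
    show "e \<in> {{i, i + m} | i. i < m \<and> i \<noteq> a \<and> i \<noteq> b}"
    proof (cases "v < m")
      case True
      with v show ?thesis
        unfolding swap_halves_def by auto
    next
      case False
      with v show ?thesis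
        unfolding swap_halves_def by (intro CollectI exI[of _ "v - m"]) (auto simp: insert_commute)
    qed
  next
    fix e assume "e \<in> {{i, i + m} | i. i < m \<and> i \<noteq> a \<and> i \<noteq> b}"
    then obtain i where "i < m" "i \<noteq> a" "i \<noteq> b" "e = {i, swap_halves m i}"
      unfolding swap_halves_def by auto
    then show "e \<in> matching_edges ?R (swap_halves m)"
      unfolding matching_edges_def by auto
  qed
  moreover have "corona m {{a, b}} = {{a + m, a}, {a, b}, {b, b + m}} \<union> {{i, i + m} | i. i < m \<and> i \<noteq> a \<and> i \<noteq> b}"
    using ab unfolding corona_def by (auto simp: insert_commute)
  ultimately show ?thesis
    unfolding path4_matching_def using ab fpf by auto
qed

section \<open>Sparse complements of N-AW graphs for even \<open>l\<close>\<close>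

locale AW_complement =
  fixes n l :: nat and H :: "nat set set"
  assumes graph: "is_graph n H" and AW: "N_AW n l (compl_graph n H)" and even_l: "even l"
begin

abbreviation nbhd :: "nat \<Rightarrow> nat set" where
  "nbhd \<equiv> open_nbhd n H"

abbreviation deg :: "nat \<Rightarrow> nat" where
  "deg v \<equiv> card (nbhd v)"

text \<open>\<open>nbr v\<close> is the neighbour of a vertex of degree one, and arbitrary otherwise.\<close>
definition nbr :: "nat \<Rightarrow> nat" where
  "nbr v = (SOME u. u \<in> nbhd v)"

definition isolated :: "nat set" where
  "isolated = {v. v < n \<and> nbhd v = {}}"

definition branch :: "nat set" where
  "branch = {v. v < n \<and> 2 \<le> deg v}"

lemma edge_bounded:
  assumes "{u, v} \<in> H"
  shows "u < n \<and> v < n"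
proof -
  obtain x y where "{u, v} = {x, y}" "x < n" "y < n"
    using is_graph_edgeE[OF graph assms] by metis
  then show ?thesis
    by (auto simp: doubleton_eq_iff)
qed

lemma nbhd_bound: "x \<in> nbhd v \<Longrightarrow> x < n"
  unfolding open_nbhd_def by simp

lemma in_nbhd_iff: "u \<in> nbhd v \<longleftrightarrow> {u, v} \<in> H"
  unfolding open_nbhd_def using edge_bounded by blast

lemma nbhd_sym: "u \<in> nbhd v \<longleftrightarrow> v \<in> nbhd u"
  unfolding in_nbhd_iff by (simp add: insert_commute)

lemma not_in_own_nbhd: "v \<notin> nbhd v"
  using singleton_not_edge[OF graph] unfolding open_nbhd_def by auto

lemma nbhd_eq_nbr: "v < n \<Longrightarrow> v \<notin> isolated \<Longrightarrow> v \<notin> branch \<Longrightarrow> nbhd v = {nbr v}"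
proof -
  assume v: "v < n" "v \<notin> isolated" "v \<notin> branch"
  then have "deg v \<noteq> 0" "deg v < 2"
    using finite_open_nbhd[of n H v] unfolding isolated_def branch_def by auto
  then have "deg v = 1"
    by linarith
  then obtain u where "nbhd v = {u}"
    by (rule card_1_singletonE)
  moreover then have "nbr v = u"
    unfolding nbr_def by simp
  ultimately show ?thesis by simp
qed

text \<open>The parity form of \<open>N_AW_dvd_of_dvd_closed_sums\<close> for \<open>d = 2\<close>: it suffices to check the
  vertices adjacent to \<open>Y\<close>, since all others see no vertex of \<open>Y\<close>.\<close>
lemma no_even_parity_set:
  assumes Y: "Y \<subseteq> {..<n}" "Y \<noteq> {}" "even (card Y)"
    and parity: "\<forall>u\<in>(\<Union>y\<in>Y. nbhd y). even (card (nbhd u \<inter> Y))"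
  shows False
proof -
  obtain v0 where v0: "v0 \<in> Y"
    using Y(2) by blast
  define y :: "nat \<Rightarrow> int" where "y u = of_bool (u \<in> Y)" for u
  have "even (card (nbhd u \<inter> Y))" for u
  proof (cases "u \<in> (\<Union>y\<in>Y. nbhd y)")
    case False
    then have "nbhd u \<inter> Y = {}"
      using nbhd_sym by blast
    then show ?thesis by simp
  qed (use parity in blast)
  then have "\<forall>u<n. 2 dvd (\<Sum>v\<in>closed_nbhd n (compl_graph n H) u. y v)"
  proof (intro allI impI)
    fix u assume "u < n"
    have "Y \<inter> {..<n} = Y"
      using Y(1) by blast
    then have "(\<Sum>v\<in>closed_nbhd n (compl_graph n H) u. y v) = int (card Y) - int (card (nbhd u \<inter> Y))"
      using sum_closed_nbhd_compl_graph[OF graph \<open>u < n\<close>] finite_open_nbhd[of n H u]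
      by (simp add: y_def Int_commute)
    moreover have "2 dvd int (card Y)" "2 dvd int (card (nbhd u \<inter> Y))"
      using \<open>even (card Y)\<close> \<open>even (card (nbhd u \<inter> Y))\<close> by simp_all
    ultimately show "2 dvd (\<Sum>v\<in>closed_nbhd n (compl_graph n H) u. y v)"
      by simp
  qed
  moreover have "(2::int) dvd int l"
    using even_l by simp
  ultimately have "2 dvd y v0"
    using N_AW_dvd_of_dvd_closed_sums[OF AW _ _] v0 Y(1) by blast
  then show False
    using v0 by (simp add: y_def)
qed

lemma no_twins:
  assumes "v < n" "w < n" "v \<noteq> w" "nbhd v = nbhd w"
  shows False
proof (rule no_even_parity_set[of "{v, w}"])
  have "nbhd u \<inter> {v, w} = {v, w}" if "u \<in> nbhd v" for u
    using that assms(4) nbhd_sym by blast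
  then show "\<forall>u\<in>(\<Union>y\<in>{v, w}. nbhd y). even (card (nbhd u \<inter> {v, w}))"
    using assms(3,4) by auto
qed (use assms in auto)

lemma card_isolated_le_1: "card isolated \<le> 1"
proof -
  have "finite isolated"
    unfolding isolated_def by simp
  moreover have "\<forall>v\<in>isolated. \<forall>w\<in>isolated. v = w"
    using no_twins unfolding isolated_def by blast
  ultimately show ?thesis
    using card_le_Suc0_iff_eq by auto
qed

lemma finite_branch: "finite branch"
  unfolding branch_def by simp

lemma leaf_nbhd:
  assumes "x \<in> nbhd u" "x \<notin> branch"
  shows "nbhd x = {u}"
proof -
  have "x < n" "x \<notin> isolated" "u \<in> nbhd x"
    using assms(1) nbhd_bound nbhd_sym unfolding isolated_def by blast+
  then show ?thesis
    using nbhd_eq_nbr[OF _ _ assms(2)] by auto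
qed

lemma card_leaves_le_1: "card (nbhd u - branch) \<le> 1"
proof -
  have "x = y" if "x \<in> nbhd u - branch" "y \<in> nbhd u - branch" for x y
  proof (rule ccontr)
    assume "x \<noteq> y"
    moreover have "nbhd x = nbhd y" "x < n" "y < n"
      using that leaf_nbhd nbhd_bound by auto
    ultimately show False
      using no_twins by blast
  qed
  then show ?thesis
    using card_le_Suc0_iff_eq[of "nbhd u - branch"] finite_open_nbhd[of n H u] by auto
qed

lemma deg_eq_leaves_plus_branch: "deg u = card (nbhd u - branch) + card (nbhd u \<inter> branch)"
proof -
  have "card ((nbhd u - branch) \<union> (nbhd u \<inter> branch))
      = card (nbhd u - branch) + card (nbhd u \<inter> branch)"
    by (rule card_Un_disjoint) (auto simp: finite_open_nbhd)
  then show ?thesis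
    by (simp add: Un_Diff_Int)
qed

lemma deg_le_card_branch:
  assumes "u \<in> branch"
  shows "deg u \<le> card branch"
proof -
  have "nbhd u \<inter> branch \<subseteq> branch - {u}"
    using not_in_own_nbhd by blast
  then have "card (nbhd u \<inter> branch) \<le> card (branch - {u})"
    using finite_branch by (intro card_mono) auto
  also have "\<dots> = card branch - 1"
    using assms by (rule card_Diff_singleton)
  finally have "card (nbhd u \<inter> branch) \<le> card branch - 1" .
  moreover have "card branch \<noteq> 0"
    using finite_branch assms by auto
  ultimately show ?thesis
    using deg_eq_leaves_plus_branch[of u] card_leaves_le_1[of u] by linarith
qed

definition excess :: nat where
  "excess = (\<Sum>v\<in>branch. deg v - 1)"

lemma twice_card_edges: "2 * card H = (n - card isolated) + excess"
proof -
  let ?D = "{..<n} - isolated"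
  have "isolated \<subseteq> {..<n}" "branch \<subseteq> ?D"
    unfolding isolated_def branch_def by auto
  have "2 * card H = (\<Sum>v<n. deg v)"
    using handshake[OF graph] by simp
  also have "\<dots> = (\<Sum>v\<in>?D. deg v)"
    by (rule sum.mono_neutral_right) (auto simp: isolated_def)
  also have "\<dots> = (\<Sum>v\<in>?D. 1 + (deg v - 1))"
  proof (rule sum.cong[OF refl])
    fix v assume "v \<in> ?D"
    then have "deg v \<noteq> 0"
      using finite_open_nbhd[of n H v] unfolding isolated_def by simp
    then show "deg v = 1 + (deg v - 1)"
      by simp
  qed
  also have "\<dots> = card ?D + (\<Sum>v\<in>?D. deg v - 1)"
    by (simp only: sum.distrib) simp
  also have "(\<Sum>v\<in>?D. deg v - 1) = (\<Sum>v\<in>branch. deg v - 1)"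
    using \<open>branch \<subseteq> ?D\<close> nbhd_eq_nbr by (intro sum.mono_neutral_right) auto
  also have "card ?D = n - card isolated"
    using \<open>isolated \<subseteq> {..<n}\<close> by (simp add: card_Diff_subset finite_subset)
  finally show ?thesis
    unfolding excess_def .
qed

lemma card_branch_le_excess: "card branch \<le> excess"
proof -
  have "(\<Sum>v\<in>branch. 1) \<le> excess"
    unfolding excess_def by (rule sum_mono) (auto simp: branch_def)
  then show ?thesis by simp
qed

lemma excess_le_card_branch: "excess \<le> card branch * (card branch - 1)"
proof -
  have "excess \<le> (\<Sum>v\<in>branch. card branch - 1)"
    unfolding excess_def by (rule sum_mono) (use deg_le_card_branch in \<open>simp add: diff_le_mono\<close>)
  then show ?thesis by simp
qed

lemma branch_vertex_with_leaf:
  assumes "u \<in> branch" "deg u = 2" "nbhd u \<inter> branch \<subseteq> {w}"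
  obtains a where "nbhd u = {a, w}" "a \<notin> branch" "a \<noteq> w" "nbhd a = {u}"
proof -
  have "card (nbhd u \<inter> branch) \<ge> 1"
    using deg_eq_leaves_plus_branch[of u] card_leaves_le_1[of u] assms(2) by linarith
  then have "nbhd u \<inter> branch = {w}"
    using assms(3) by (metis card_0_eq finite_Int finite_open_nbhd not_one_le_zero subset_singletonD)
  then have "card (nbhd u - branch) = 1"
    using deg_eq_leaves_plus_branch[of u] assms(2) by simp
  then obtain a where a: "nbhd u - branch = {a}"
    by (rule card_1_singletonE)
  show thesis
  proof
    show "nbhd u = {a, w}" "a \<notin> branch" "a \<noteq> w"
      using a \<open>nbhd u \<inter> branch = {w}\<close> by blast+
    show "nbhd a = {u}"
      using a leaf_nbhd by blast
  qed
qed

lemma edges_eq_Union_nbhd: "H = (\<Union>v<n. (\<lambda>u. {u, v}) ` nbhd v)"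
proof (intro set_eqI iffI)
  fix e assume "e \<in> H"
  then obtain x y where "e = {x, y}" "x < n"
    using is_graph_edgeE[OF graph] by metis
  with \<open>e \<in> H\<close> show "e \<in> (\<Union>v<n. (\<lambda>u. {u, v}) ` nbhd v)"
    using in_nbhd_iff[of y x] by (auto simp: insert_commute)
qed (auto simp: in_nbhd_iff)

lemma matching_of_leaves:
  assumes "R \<subseteq> {..<n}" and leaves: "\<forall>v\<in>R. nbhd v = {nbr v} \<and> nbr v \<in> R"
  shows "fpf_involution R nbr" "(\<Union>v\<in>R. (\<lambda>u. {u, v}) ` nbhd v) = matching_edges R nbr"
proof -
  have "nbr (nbr v) = v" if "v \<in> R" for v
    using leaves that nbhd_sym[of v "nbr v"] by auto
  then show "fpf_involution R nbr"
    using leaves not_in_own_nbhd unfolding fpf_involution_def by fastforce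
  show "(\<Union>v\<in>R. (\<lambda>u. {u, v}) ` nbhd v) = matching_edges R nbr"
    using leaves unfolding matching_edges_def by (auto simp: insert_commute)
qed

lemma perfect_matching_case:
  assumes "isolated = {}" "branch = {}"
  shows "fpf_involution {..<n} nbr \<and> H = matching_edges {..<n} nbr"
proof -
  have leaves: "\<forall>v\<in>{..<n}. nbhd v = {nbr v} \<and> nbr v \<in> {..<n}"
    using nbhd_eq_nbr assms nbhd_bound by blast
  show ?thesis
    using matching_of_leaves[OF order.refl leaves] edges_eq_Union_nbhd by simp
qed

lemma path4_case:
  assumes "isolated = {}" "branch = {u, w}" "u \<noteq> w" "deg u = 2" "deg w = 2"
  shows "\<exists>a d. path4_matching n H a u w d nbr"
proof -
  have uw: "u \<in> branch" "w \<in> branch" "u < n" "w < n"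
    using assms(2) unfolding branch_def by auto
  have "nbhd u \<inter> branch \<subseteq> {w}" "nbhd w \<inter> branch \<subseteq> {u}"
    using assms(2) not_in_own_nbhd[of u] not_in_own_nbhd[of w] by auto
  obtain a where a: "nbhd u = {a, w}" "a \<notin> branch" "a \<noteq> w" "nbhd a = {u}"
    by (rule branch_vertex_with_leaf[OF uw(1) assms(4) \<open>nbhd u \<inter> branch \<subseteq> {w}\<close>])
  obtain d where d: "nbhd w = {d, u}" "d \<notin> branch" "d \<noteq> u" "nbhd d = {w}"
    by (rule branch_vertex_with_leaf[OF uw(2) assms(5) \<open>nbhd w \<inter> branch \<subseteq> {u}\<close>])
  have "a < n" "d < n"
    using a(1) d(1) nbhd_bound by blast+
  moreover have "a \<noteq> u" "w \<noteq> d" "a \<noteq> d"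
    using a(2,4) d(2,4) uw(1,2) assms(3) by auto
  ultimately have abcd: "{a, u, w, d} \<subseteq> {..<n}" "distinct [a, u, w, d]"
    using uw a(3) d(3) assms(3) by auto
  let ?R = "{..<n} - {a, u, w, d}"
  have leaves: "\<forall>v\<in>?R. nbhd v = {nbr v} \<and> nbr v \<in> ?R"
  proof
    fix v assume v: "v \<in> ?R"
    then have nbhd_v: "nbhd v = {nbr v}"
      using nbhd_eq_nbr assms(1,2) by blast
    then have "v \<in> nbhd (nbr v)" "nbr v < n"
      using nbhd_sym[of v "nbr v"] nbhd_bound[of "nbr v" v] by auto
    moreover have "v \<notin> nbhd a" "v \<notin> nbhd u" "v \<notin> nbhd w" "v \<notin> nbhd d"
      using v unfolding a(1,4) d(1,4) by auto
    ultimately have "nbr v \<in> ?R"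
      by auto
    with nbhd_v show "nbhd v = {nbr v} \<and> nbr v \<in> ?R" ..
  qed
  have "{..<n} = {a, u, w, d} \<union> ?R"
    using abcd(1) by blast
  with edges_eq_Union_nbhd have "H = (\<Union>v\<in>{a, u, w, d} \<union> ?R. (\<lambda>x. {x, v}) ` nbhd v)"
    by (subst (asm) \<open>{..<n} = {a, u, w, d} \<union> ?R\<close>)
  then have "H = (\<Union>v\<in>{a, u, w, d}. (\<lambda>x. {x, v}) ` nbhd v) \<union> (\<Union>v\<in>?R. (\<lambda>x. {x, v}) ` nbhd v)"
    by (simp only: UN_Un)
  also have "(\<Union>v\<in>{a, u, w, d}. (\<lambda>x. {x, v}) ` nbhd v) = {{a, u}, {u, w}, {w, d}}"
  proof -
    have "{u, a} = {a, u}" "{w, u} = {u, w}" "{d, w} = {w, d}"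
      by (simp_all add: insert_commute)
    then show ?thesis
      unfolding UN_insert UN_empty a(1,4) d(1,4) by auto
  qed
  finally have "H = {{a, u}, {u, w}, {w, d}} \<union> matching_edges ?R nbr"
    using matching_of_leaves(2)[OF _ leaves] by simp
  then have "path4_matching n H a u w d nbr"
    unfolding path4_matching_def using abcd matching_of_leaves(1)[OF _ leaves] by blast
  then show ?thesis by blast
qed

lemma nbhd_eq_of_deg_2:
  assumes "deg x = 2" "y \<in> nbhd x" "w \<in> nbhd x" "y \<noteq> w"
  shows "nbhd x = {y, w}"
proof -
  have "{y, w} \<subseteq> nbhd x" "card {y, w} = deg x"
    using assms by auto
  then show ?thesis
    using card_subset_eq[OF finite_open_nbhd] by metis
qed

lemma triangle_case:
  assumes "isolated = {z}" "branch = {x, y, w}" "distinct [x, y, w]"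
    "deg x = 2" "deg y = 2" "deg w = 2" "y \<in> nbhd x" "w \<in> nbhd x" "w \<in> nbhd y"
  shows False
proof -
  have "z \<in> isolated"
    using assms(1) by simp
  then have z: "z < n" "nbhd z = {}" "z \<notin> branch"
    unfolding isolated_def branch_def by auto
  have xyw: "x < n" "y < n" "w < n"
    using assms(2) unfolding branch_def by auto
  have nbhds: "nbhd x = {y, w}" "nbhd y = {x, w}" "nbhd w = {x, y}"
    using nbhd_eq_of_deg_2 assms(3-9) nbhd_sym by auto
  show False
  proof (rule no_even_parity_set[of "{z, x, y, w}"])
    show "{z, x, y, w} \<subseteq> {..<n}" "{z, x, y, w} \<noteq> {}"
      using z xyw by auto
    show "even (card {z, x, y, w})"
      using z(3) assms(2,3) by auto
    have "(\<Union>v\<in>{z, x, y, w}. nbhd v) = {x, y, w}"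
      using z(2) nbhds by auto
    then show "\<forall>u\<in>(\<Union>v\<in>{z, x, y, w}. nbhd v). even (card (nbhd u \<inter> {z, x, y, w}))"
      using nbhds z(3) assms(2,3) by auto
  qed
qed

lemma path5_case:
  assumes "isolated = {z}" "branch = {x, y, w}" "distinct [x, y, w]"
    "deg x = 2" "deg y = 2" "deg w = 2" "w \<notin> nbhd x"
  shows False
proof -
  have "z \<in> isolated"
    using assms(1) by simp
  then have z: "z < n" "nbhd z = {}" "z \<notin> branch"
    unfolding isolated_def branch_def by auto
  have xyw: "x \<in> branch" "y \<in> branch" "w \<in> branch"
    using assms(2) by auto
  have "nbhd x \<inter> branch \<subseteq> {y}" "nbhd w \<inter> branch \<subseteq> {y}"
    using assms(2,7) nbhd_sym[of x w] not_in_own_nbhd[of x] not_in_own_nbhd[of w] by auto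
  obtain a where a: "nbhd x = {a, y}" "a \<notin> branch" "a \<noteq> y" "nbhd a = {x}"
    by (rule branch_vertex_with_leaf[OF xyw(1) assms(4) \<open>nbhd x \<inter> branch \<subseteq> {y}\<close>])
  obtain e where e: "nbhd w = {e, y}" "e \<notin> branch" "e \<noteq> y" "nbhd e = {w}"
    by (rule branch_vertex_with_leaf[OF xyw(3) assms(6) \<open>nbhd w \<inter> branch \<subseteq> {y}\<close>])
  have "x \<in> nbhd y" "w \<in> nbhd y"
    using a(1) e(1) nbhd_sym by auto
  then have ny: "nbhd y = {x, w}"
    using nbhd_eq_of_deg_2[OF assms(5)] assms(3) by simp
  have distinct: "z \<noteq> a" "z \<noteq> e" "z \<noteq> y" "a \<noteq> e"
    using z(2,3) a(4) e(4) xyw(2) assms(3) by auto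
  show False
  proof (rule no_even_parity_set[of "{z, a, y, e}"])
    have "a < n" "y < n" "e < n"
      using nbhd_bound[of a x] nbhd_bound[of y x] nbhd_bound[of e w] a(1) e(1) by auto
    with z(1) show "{z, a, y, e} \<subseteq> {..<n}" "{z, a, y, e} \<noteq> {}"
      by auto
    show "even (card {z, a, y, e})"
      using distinct a(3) e(3) by auto
    have "(\<Union>v\<in>{z, a, y, e}. nbhd v) = {x, w}"
      using z(2) a(4) e(4) ny by auto
    then show "\<forall>u\<in>(\<Union>v\<in>{z, a, y, e}. nbhd v). even (card (nbhd u \<inter> {z, a, y, e}))"
      using a(1,3) e(1,3) distinct by auto
  qed
qed

text \<open>Each branch vertex has at most one leaf and hence a branch neighbour, so the three branch
  vertices span a triangle or a path; both cases are refuted by parity sets.\<close>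
lemma three_branch_case:
  assumes "isolated = {z}" "branch = {x, y, w}" "distinct [x, y, w]"
    "deg x = 2" "deg y = 2" "deg w = 2"
  shows False
proof -
  have "branch = {x, w, y}" "branch = {y, x, w}"
    using assms(2) by auto
  then show False
    using path5_case[OF assms(1,2)] path5_case[of z x w y] path5_case[of z y x w]
      triangle_case[OF assms] assms by auto
qed

lemma two_le_card_branch: "excess \<noteq> 0 \<Longrightarrow> card branch \<ge> 2"
proof (rule ccontr)
  assume "excess \<noteq> 0" "\<not> card branch \<ge> 2"
  then have "card branch * (card branch - 1) = 0"
    by (cases "card branch") auto
  with \<open>excess \<noteq> 0\<close> show False
    using excess_le_card_branch by simp
qed

lemma sparse_no_isolated_cases:
  assumes "isolated = {}" "excess = 0 \<or> excess = 2"
  shows "(fpf_involution {..<n} nbr \<and> H = matching_edges {..<n} nbr) \<or>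
    (\<exists>a b c d. path4_matching n H a b c d nbr)"
  using assms(2)
proof
  assume "excess = 0"
  then have "branch = {}"
    using card_branch_le_excess finite_branch by simp
  then show ?thesis
    using perfect_matching_case[OF assms(1)] by blast
next
  assume excess: "excess = 2"
  then have "card branch = 2"
    using card_branch_le_excess two_le_card_branch by fastforce
  then obtain u w where uw: "branch = {u, w}" "u \<noteq> w"
    by (meson card_2_iff)
  have "deg u \<ge> 2" "deg w \<ge> 2" "(deg u - 1) + (deg w - 1) = 2"
    using uw excess unfolding excess_def branch_def by auto
  then have "deg u = 2" "deg w = 2"
    by linarith+
  then show ?thesis
    using path4_case[OF assms(1) uw] by blast
qed

lemma sparse_one_isolated_impossible:
  assumes "isolated = {z}" "excess = 1 \<or> excess = 3"
  shows False
proof -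
  have "card branch \<ge> 2" "card branch \<le> 3"
    using two_le_card_branch card_branch_le_excess assms(2) by auto
  moreover have "card branch \<noteq> 2"
    using card_branch_le_excess excess_le_card_branch assms(2) by auto
  ultimately have "card branch = 3"
    by linarith
  then obtain x y w where "branch = {x, y, w}" "x \<noteq> y" "y \<noteq> w" "x \<noteq> w"
    by (meson card_3_iff)
  then have xyw: "branch = {x, y, w}" "distinct [x, y, w]"
    by auto
  have "deg x \<ge> 2" "deg y \<ge> 2" "deg w \<ge> 2" "(deg x - 1) + (deg y - 1) + (deg w - 1) = excess"
    using xyw unfolding excess_def branch_def by auto
  then have "deg x = 2" "deg y = 2" "deg w = 2"
    using assms(2) by linarith+
  then show False
    using three_branch_case[OF assms(1) xyw] by blast
qed

lemma sparse_classification: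
  assumes "even n" "card H \<le> n div 2 + 1"
  shows "(fpf_involution {..<n} nbr \<and> H = matching_edges {..<n} nbr) \<or>
    (\<exists>a b c d. path4_matching n H a b c d nbr)"
proof -
  have count: "2 * card H = (n - card isolated) + excess"
    by (rule twice_card_edges)
  have bound: "2 * card H \<le> n + 2"
    using assms by simp
  have "finite isolated"
    unfolding isolated_def by simp
  have "card isolated = 0 \<or> card isolated = 1"
    using card_isolated_le_1 by linarith
  then show ?thesis
  proof
    assume "card isolated = 0"
    then have "isolated = {}"
      using \<open>finite isolated\<close> by simp
    moreover have "excess = 0 \<or> excess = 2"
      using count bound assms(1) \<open>card isolated = 0\<close> by presburger
    ultimately show ?thesis
      by (rule sparse_no_isolated_cases)
  next
    assume "card isolated = 1"
    then obtain z where z: "isolated = {z}"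
      by (rule card_1_singletonE)
    then have "z < n"
      unfolding isolated_def by blast
    then have "excess = 1 \<or> excess = 3"
      using count bound assms(1) \<open>card isolated = 1\<close> by presburger
    with z show ?thesis
      using sparse_one_isolated_impossible by blast
  qed
qed

end

section \<open>Maximum size and extremal graphs\<close>

lemma N_AW_empty_graph: "N_AW n l {}"
  unfolding N_AW_def
proof
  fix f :: "nat \<Rightarrow> int"
  have "closed_nbhd n {} v = {v}" if "v < n" for v
    using that unfolding closed_nbhd_def by auto
  then have "\<forall>v<n. (f v + (\<Sum>u\<in>closed_nbhd n {} v. - f u)) mod int l = 0"
    by simp
  then show "\<exists>t. \<forall>v<n. (f v + (\<Sum>u\<in>closed_nbhd n {} v. t u)) mod int l = 0"
    by blast
qed

lemma finite_card_N_AW_graphs: "finite {card E | E. is_graph n E \<and> N_AW n l E}"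
  by (rule finite_subset[of _ "{..n choose 2}"]) (auto simp: card_graph_le)

lemma card_le_maxN: "is_graph n E \<Longrightarrow> N_AW n l E \<Longrightarrow> card E \<le> maxN n l"
  unfolding maxN_def using finite_card_N_AW_graphs by (intro Max_ge) auto

lemma maxN_attained: "\<exists>E. is_graph n E \<and> N_AW n l E \<and> card E = maxN n l"
proof -
  have "is_graph n {}"
    unfolding is_graph_def by simp
  then have "{card E | E. is_graph n E \<and> N_AW n l E} \<noteq> {}"
    using N_AW_empty_graph by blast
  then have "maxN n l \<in> {card E | E. is_graph n E \<and> N_AW n l E}"
    unfolding maxN_def using finite_card_N_AW_graphs by (rule Max_in[rotated])
  then show ?thesis
    by auto
qed

lemma choose_two_ge: "n \<ge> 4 \<Longrightarrow> n choose 2 \<ge> n div 2 + 2"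
proof -
  assume "n \<ge> 4"
  then have "n * 3 \<le> n * (n - 1)"
    by simp
  then have "n * 3 div 2 \<le> n * (n - 1) div 2"
    by (rule div_le_mono)
  then show ?thesis
    using \<open>n \<ge> 4\<close> by (simp add: choose_two)
qed

lemma compl_of_sparse_N_AW_cases:
  assumes "even n" "even l" "n \<ge> 1" "is_graph n E" "N_AW n l E"
    and sparse: "card (compl_graph n E) \<le> n div 2 + 1"
  shows "card (compl_graph n E) = n div 2 \<and> gcd (n - 1) l = 1 \<or>
    card (compl_graph n E) = n div 2 + 1 \<and> gcd (n - 3) l = 1 \<and>
    (\<exists>a b c d p. path4_matching n (compl_graph n E) a b c d p)"
proof -
  let ?H = "compl_graph n E"
  interpret AW_complement n l ?H
    using assms is_graph_compl_graph compl_compl_graph by unfold_locales auto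
  show ?thesis
    using sparse_classification[OF assms(1) sparse]
  proof
    assume "fpf_involution {..<n} nbr \<and> ?H = matching_edges {..<n} nbr"
    then show ?thesis
      using card_perfect_matching N_AW_compl_perfect_matching_iff assms(3) AW by metis
  next
    assume "\<exists>a b c d. path4_matching n ?H a b c d nbr"
    then show ?thesis
      using card_path4_matching N_AW_compl_path4_matching_iff AW by blast
  qed
qed

lemma maxN_ge_compl_perfect_matching:
  assumes "even n" "n \<ge> 1" "gcd (n - 1) l = 1"
  shows "(n choose 2) - n div 2 \<le> maxN n l"
proof -
  let ?M = "matching_edges {..<n} pair_partner"
  have M: "fpf_involution {..<n} pair_partner"
    using fpf_involution_pair_partner[of 0 n] assms(1) by (simp add: atLeast0LessThan)
  then have "N_AW n l (compl_graph n ?M)"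
    using N_AW_compl_perfect_matching_iff assms(2,3) by simp
  then have "card (compl_graph n ?M) \<le> maxN n l"
    by (rule card_le_maxN[OF is_graph_compl_graph])
  moreover have "card (compl_graph n ?M) = (n choose 2) - n div 2"
    using card_compl_graph[OF is_graph_matching_edges[OF M order.refl]] card_perfect_matching[OF M]
    by simp
  ultimately show ?thesis
    by simp
qed

lemma maxN_eq_iff:
  assumes n: "even n" "n \<ge> 4" and "even l"
  shows "maxN n l = (n choose 2) - (n div 2 + 1) \<longleftrightarrow> gcd (n - 1) l \<noteq> 1 \<and> gcd (n - 3) l = 1"
proof -
  let ?C = "n choose 2" and ?m = "n div 2"
  have C: "?C \<ge> ?m + 2"
    using choose_two_ge[OF n(2)] .
  have P: "path4_matching n (P4_P2s n) 0 1 2 3 pair_partner"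
    by (rule path4_matching_P4_P2s[OF n])
  have card_compl_P: "card (compl_graph n (P4_P2s n)) = ?C - (?m + 1)"
    using card_compl_graph[OF path4_matching_is_graph[OF P]] card_path4_matching[OF P] by simp
  obtain E where E: "is_graph n E" "N_AW n l E" "card E = maxN n l"
    using maxN_attained by blast
  note card_E = card_eq_diff_card_compl_graph[OF E(1)]
  show ?thesis
  proof
    assume max: "maxN n l = ?C - (?m + 1)"
    have "card (compl_graph n E) = ?m + 1"
      using card_E E(3) max C by linarith
    then have "gcd (n - 3) l = 1"
      using compl_of_sparse_N_AW_cases[OF n(1) \<open>even l\<close> _ E(1,2)] n(2) by auto
    moreover have "gcd (n - 1) l \<noteq> 1"
      using maxN_ge_compl_perfect_matching[OF n(1) _, of l] n(2) max C by force
    ultimately show "gcd (n - 1) l \<noteq> 1 \<and> gcd (n - 3) l = 1"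
      by simp
  next
    assume gcds: "gcd (n - 1) l \<noteq> 1 \<and> gcd (n - 3) l = 1"
    then have "N_AW n l (compl_graph n (P4_P2s n))"
      using N_AW_compl_path4_matching_iff[OF P] by simp
    then have "?C - (?m + 1) \<le> maxN n l"
      using card_le_maxN[OF is_graph_compl_graph] card_compl_P by metis
    moreover have "\<not> card (compl_graph n E) \<le> ?m"
      using compl_of_sparse_N_AW_cases[OF n(1) \<open>even l\<close> _ E(1,2)] n(2) gcds by fastforce
    then have "maxN n l \<le> ?C - (?m + 1)"
      using card_E E(3) by linarith
    ultimately show "maxN n l = ?C - (?m + 1)"
      by simp
  qed
qed

lemma extremal_iff_graph_iso:
  assumes n: "even n" "n \<ge> 4" and "even l" and gcds: "gcd (n - 1) l \<noteq> 1" "gcd (n - 3) l = 1"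
  shows "extremal n l E \<longleftrightarrow> graph_iso n (compl_graph n (P4_P2s n)) E"
proof -
  let ?P = "P4_P2s n"
  have max: "maxN n l = (n choose 2) - (n div 2 + 1)"
    using maxN_eq_iff[OF n \<open>even l\<close>] gcds by simp
  have P: "path4_matching n ?P 0 1 2 3 pair_partner"
    by (rule path4_matching_P4_P2s[OF n])
  have P_graph: "is_graph n ?P"
    by (rule path4_matching_is_graph[OF P])
  show ?thesis
  proof
    assume "extremal n l E"
    then have E: "is_graph n E" "N_AW n l E" "card E = maxN n l"
      unfolding extremal_def by auto
    have "card (compl_graph n E) = n div 2 + 1"
      using card_eq_diff_card_compl_graph[OF E(1)] E(3) max choose_two_ge[OF n(2)] by linarith
    then obtain a b c d p where "path4_matching n (compl_graph n E) a b c d p"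
      using compl_of_sparse_N_AW_cases[OF n(1) \<open>even l\<close> _ E(1,2)] n(2) by auto
    then have "graph_iso n ?P (compl_graph n E)"
      by (rule path4_matching_graph_iso[OF P])
    then have "graph_iso n (compl_graph n ?P) (compl_graph n (compl_graph n E))"
      by (rule graph_iso_compl_graph[OF P_graph])
    then show "graph_iso n (compl_graph n ?P) E"
      unfolding compl_compl_graph[OF E(1)] .
  next
    assume iso: "graph_iso n (compl_graph n ?P) E"
    have "N_AW n l (compl_graph n ?P)"
      using N_AW_compl_path4_matching_iff[OF P] gcds by simp
    moreover have "card (compl_graph n ?P) = maxN n l"
      using max card_compl_graph[OF P_graph] card_path4_matching[OF P] by simp
    ultimately show "extremal n l E"
      unfolding extremal_def
      using graph_iso_is_graph[OF is_graph_compl_graph iso] graph_iso_N_AW[OF is_graph_compl_graph iso]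
        graph_iso_card[OF is_graph_compl_graph iso] by simp
  qed
qed

lemma is_graph_corona:
  assumes "is_graph m H"
  shows "is_graph (2 * m) (corona m H)"
  unfolding is_graph_def
proof
  fix e assume "e \<in> corona m H"
  then consider "e \<in> H" | i where "i < m" "e = {i, i + m}"
    unfolding corona_def by blast
  then show "e \<in> {{u, v} |u v. u < 2 * m \<and> v < 2 * m \<and> u \<noteq> v}"
  proof cases
    case 1
    then obtain u v where "e = {u, v}" "u < m" "v < m" "u \<noteq> v"
      using is_graph_edgeE[OF assms] by metis
    then show ?thesis by auto
  next
    case (2 i)
    then show ?thesis
      by (intro CollectI exI[of _ i] exI[of _ "i + m"]) auto
  qed
qed

lemma card_corona:
  assumes "is_graph m H"
  shows "card (corona m H) = card H + m"
proof -
  let ?pendant_edges = "(\<lambda>i. {i, i + m}) ` {..<m}"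
  have "corona m H = H \<union> ?pendant_edges"
    unfolding corona_def by auto
  moreover have "H \<inter> ?pendant_edges = {}"
    using assms unfolding is_graph_def by (auto simp: doubleton_eq_iff)
  moreover have "card ?pendant_edges = m"
    by (rule card_image[THEN trans]) (auto simp: inj_on_def doubleton_eq_iff)
  ultimately show ?thesis
    using finite_graph[OF assms] by (simp add: card_Un_disjoint)
qed

lemma graph_iso_corona_edge:
  assumes n: "even n" "n \<ge> 4" and ab: "a < n div 2" "b < n div 2" "a \<noteq> b"
  shows "graph_iso n (P4_P2s n) (corona (n div 2) {{a, b}})"
    "graph_iso n (corona (n div 2) {{a, b}}) (P4_P2s n)"
proof -
  have P: "path4_matching n (P4_P2s n) 0 1 2 3 pair_partner"
    by (rule path4_matching_P4_P2s[OF n])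
  have "path4_matching n (corona (n div 2) {{a, b}}) (a + n div 2) a b (b + n div 2) (swap_halves (n div 2))"
    using path4_matching_corona_edge[OF ab] n(1) by simp
  then show "graph_iso n (P4_P2s n) (corona (n div 2) {{a, b}})"
    "graph_iso n (corona (n div 2) {{a, b}}) (P4_P2s n)"
    using path4_matching_graph_iso P by blast+
qed

lemma pendant_card_iff_graph_iso:
  assumes n: "even n" "n \<ge> 4"
  shows "pendant n G \<and> card G = n div 2 + 1 \<longleftrightarrow> graph_iso n (P4_P2s n) G"
proof -
  let ?P = "P4_P2s n" and ?m = "n div 2"
  have nm: "n = 2 * ?m"
    using n(1) by simp
  have P: "path4_matching n ?P 0 1 2 3 pair_partner"
    by (rule path4_matching_P4_P2s[OF n])
  have P_graph: "is_graph n ?P"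
    by (rule path4_matching_is_graph[OF P])
  show ?thesis
  proof
    assume "pendant n G \<and> card G = ?m + 1"
    then obtain K where K: "is_graph ?m K" "graph_iso n (corona ?m K) G" "card G = ?m + 1"
      unfolding pendant_def using nm by auto
    have corona_graph: "is_graph n (corona ?m K)"
      using is_graph_corona[OF K(1)] nm by simp
    have "card K = 1"
      using graph_iso_card[OF corona_graph K(2)] card_corona[OF K(1)] K(3) by simp
    then obtain e where "K = {e}"
      by (rule card_1_singletonE)
    moreover obtain a b where "e = {a, b}" "a < ?m" "b < ?m" "a \<noteq> b"
      using is_graph_edgeE[OF K(1), of e] \<open>K = {e}\<close> by blast
    ultimately have ab: "K = {{a, b}}" "a < ?m" "b < ?m" "a \<noteq> b"
      by simp_all
    have "graph_iso n ?P (corona ?m K)"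
      using graph_iso_corona_edge(1)[OF n ab(2-4)] ab(1) by simp
    then show "graph_iso n ?P G"
      using graph_iso_trans K(2) by blast
  next
    assume iso: "graph_iso n ?P G"
    have "graph_iso n (corona ?m {{0, 1}}) ?P"
      using graph_iso_corona_edge(2)[OF n, of 0 1] n(2) by simp
    then have "graph_iso n (corona ?m {{0, 1}}) G"
      using graph_iso_trans iso by blast
    moreover have "{0, 1} \<in> {{u, v} |u v. u < ?m \<and> v < ?m \<and> u \<noteq> v}"
      using n(2) by (intro CollectI exI[of _ "0::nat"] exI[of _ "1::nat"]) auto
    then have "is_graph ?m {{0, 1}}"
      unfolding is_graph_def by simp
    ultimately have "pendant n G"
      unfolding pendant_def using graph_iso_is_graph[OF P_graph iso] nm by metis
    moreover have "card G = ?m + 1"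
      using graph_iso_card[OF P_graph iso] card_path4_matching[OF P] by simp
    ultimately show "pendant n G \<and> card G = ?m + 1" ..
  qed
qed

theorem proposition4p12:
  fixes n l :: nat
  assumes "even n" and "even l" and "n \<ge> 4" and "l \<ge> 2"
  shows "(maxN n l = (n choose 2) - (n div 2 + 1) \<longleftrightarrow>
            gcd (n - 1) l \<noteq> 1 \<and> gcd (n - 3) l = 1)
       \<and> (gcd (n - 1) l \<noteq> 1 \<and> gcd (n - 3) l = 1 \<longrightarrow>
            (\<forall>E. extremal n l E \<longleftrightarrow>
                   graph_iso n (compl_graph n (P4_P2s n)) E))
       \<and> (\<forall>G. pendant n G \<and> card G = n div 2 + 1 \<longleftrightarrow> graph_iso n (P4_P2s n) G)"
proof (intro conjI impI allI)
  show "maxN n l = (n choose 2) - (n div 2 + 1) \<longleftrightarrow> gcd (n - 1) l \<noteq> 1 \<and> gcd (n - 3) l = 1"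
    by (rule maxN_eq_iff[OF assms(1,3,2)])
  show "extremal n l E \<longleftrightarrow> graph_iso n (compl_graph n (P4_P2s n)) E"
    if "gcd (n - 1) l \<noteq> 1 \<and> gcd (n - 3) l = 1" for E
    using extremal_iff_graph_iso[OF assms(1,3,2)] that by simp
  show "pendant n G \<and> card G = n div 2 + 1 \<longleftrightarrow> graph_iso n (P4_P2s n) G" for G
    by (rule pendant_card_iff_graph_iso[OF assms(1,3)])
qed

end
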